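(* For every positive integer $n$, $$\sum_{j=1}^{n-1}\csc^6\left(\frac{j\pi}{2n}\right) = \frac{8(n+1)(n-1)(8n^4+29n^2+71)}{945}.$$
   Context: Empty sums are equal to $0$. *)

theory Defs
  imports Complex_Main
begin

definition csc :: "real \<Rightarrow> real" where
  "csc x = 1 / sin x"

end

theory Submission
  imports Defs "HOL-Computational_Algebra.Polynomial"
begin

(* For 0 < j < n the numbers tan^2 (j pi / 2n) are n - 1 distinct roots of the polynomial
   P(X) = sum_k (-1)^k C(2n, 2k+1) X^k of degree n - 1, since t P(t^2) = Im (1 + i t)^(2n)
   and (1 + i tan u)^(2n) = cis (2n u) / cos^(2n) u. As P(0) = 2n, this means
   P = 2n prod_j (1 - cot^2 (j pi / 2n) X). Comparing the coefficients of X, X^2, X^3 and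
   applying Newton's identities yields the power sums of cot^2 (j pi / 2n) up to the third,
   and csc^6 = (1 + cot^2)^3 reduces the theorem to these. *)

lemma coeff_prod_linear_factors:
  fixes a :: "'b \<Rightarrow> 'a::comm_ring_1"
  assumes "finite A"
  shows "coeff (\<Prod>j\<in>A. [:1, - a j:]) 1 = - (\<Sum>j\<in>A. a j)"
    and "2 * coeff (\<Prod>j\<in>A. [:1, - a j:]) 2
           = (\<Sum>j\<in>A. a j) ^ 2 - (\<Sum>j\<in>A. a j ^ 2)"
    and "6 * coeff (\<Prod>j\<in>A. [:1, - a j:]) 3 = - ((\<Sum>j\<in>A. a j) ^ 3
           - 3 * (\<Sum>j\<in>A. a j) * (\<Sum>j\<in>A. a j ^ 2) + 2 * (\<Sum>j\<in>A. a j ^ 3))"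
proof -
  let ?P = "\<lambda>A. \<Prod>j\<in>A. [:1, - a j:]" and ?s = "\<lambda>A k. \<Sum>j\<in>A. a j ^ k"
  have "coeff (?P A) 0 = 1 \<and> coeff (?P A) 1 = - ?s A 1
        \<and> 2 * coeff (?P A) 2 = ?s A 1 ^ 2 - ?s A 2
        \<and> 6 * coeff (?P A) 3 = - (?s A 1 ^ 3 - 3 * ?s A 1 * ?s A 2 + 2 * ?s A 3)"
    using assms
  proof (induction A rule: finite_induct)
    case (insert x F)
    have step:
      "coeff (?P (insert x F)) (Suc k) = coeff (?P F) (Suc k) - a x * coeff (?P F) k" for k
      using insert.hyps by simp
    have sum_insert: "?s (insert x F) k = a x ^ k + ?s F k" for k
      using insert.hyps by simp
    from insert.IH have ih0: "coeff (?P F) 0 = 1" and ih1: "coeff (?P F) 1 = - ?s F 1"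
      and ih2: "2 * coeff (?P F) 2 = ?s F 1 ^ 2 - ?s F 2"
      and ih3: "6 * coeff (?P F) 3 = - (?s F 1 ^ 3 - 3 * ?s F 1 * ?s F 2 + 2 * ?s F 3)"
      by simp_all
    have coeff0: "coeff (?P (insert x F)) 0 = 1"
      using insert by simp
    have coeff1: "coeff (?P (insert x F)) 1 = - ?s (insert x F) 1"
      using step[of 0] ih0 ih1 insert.hyps by simp
    have step2: "coeff (?P (insert x F)) 2 = coeff (?P F) 2 - a x * coeff (?P F) 1"
      using step[of 1] by (simp add: numeral_2_eq_2)
    have step3: "coeff (?P (insert x F)) 3 = coeff (?P F) 3 - a x * coeff (?P F) 2"
      using step[of 2] by (simp add: numeral_3_eq_3 numeral_2_eq_2)
    have "2 * coeff (?P (insert x F)) 2 = 2 * coeff (?P F) 2 - 2 * a x * coeff (?P F) 1"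
      unfolding step2 by (simp add: algebra_simps)
    also have "\<dots> = ?s (insert x F) 1 ^ 2 - ?s (insert x F) 2"
      unfolding ih1 ih2 sum_insert by (simp add: power2_eq_square algebra_simps)
    finally have coeff2:
      "2 * coeff (?P (insert x F)) 2 = ?s (insert x F) 1 ^ 2 - ?s (insert x F) 2" .
    have "6 * coeff (?P (insert x F)) 3 = 6 * coeff (?P F) 3 - 3 * a x * (2 * coeff (?P F) 2)"
      unfolding step3 by (simp add: algebra_simps)
    also have "\<dots> = - (?s (insert x F) 1 ^ 3 - 3 * ?s (insert x F) 1 * ?s (insert x F) 2
                       + 2 * ?s (insert x F) 3)"
      unfolding ih2 ih3 sum_insert by (simp add: power2_eq_square power3_eq_cube algebra_simps)
    finally show ?case using coeff0 coeff1 coeff2 by blast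
  qed simp
  then show "coeff (?P A) 1 = - (\<Sum>j\<in>A. a j)"
    and "2 * coeff (?P A) 2 = (\<Sum>j\<in>A. a j) ^ 2 - ?s A 2"
    and "6 * coeff (?P A) 3 = - ((\<Sum>j\<in>A. a j) ^ 3
           - 3 * (\<Sum>j\<in>A. a j) * ?s A 2 + 2 * ?s A 3)"
    by simp_all
qed

lemma poly_eq_smult_prod_reciprocal_roots:
  fixes p :: "'a::field poly" and x :: "'b \<Rightarrow> 'a"
  assumes "finite A" and "inj_on x A" and "\<And>j. j \<in> A \<Longrightarrow> x j \<noteq> 0"
    and "\<And>j. j \<in> A \<Longrightarrow> poly p (x j) = 0" and "degree p \<le> card A"
  shows "p = smult (poly p 0) (\<Prod>j\<in>A. [:1, - inverse (x j):])"
proof (rule poly_eqI_degree)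
  let ?Q = "smult (poly p 0) (\<Prod>j\<in>A. [:1, - inverse (x j):])"
  show "poly p z = poly ?Q z" if "z \<in> insert 0 (x ` A)" for z
    using that assms(1,3,4) by (auto simp: poly_prod field_simps intro!: prod_zero)
  have "0 \<notin> x ` A"
    using assms(3) by force
  then have card: "card (insert 0 (x ` A)) = Suc (card A)"
    using assms(1,2) by (simp add: card_image)
  then show "degree p < card (insert 0 (x ` A))"
    using assms(5) by simp
  have "(\<Sum>j\<in>A. degree [:1, - inverse (x j):]) \<le> card A"
    using sum_bounded_above[of A "\<lambda>j. degree [:1, - inverse (x j):]" 1] by simp
  then have "degree (\<Prod>j\<in>A. [:1, - inverse (x j):]) \<le> card A"
    using degree_prod_sum_le[OF assms(1), of "\<lambda>j. [:1, - inverse (x j):]"]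
    by (simp add: o_def)
  then show "degree ?Q < card (insert 0 (x ` A))"
    unfolding card by (meson degree_smult_le le_imp_less_Suc order_trans)
qed

definition tan_sq_poly :: "nat \<Rightarrow> real poly" where
  "tan_sq_poly n = (\<Sum>k\<le>n. monom ((-1) ^ k * real (2 * n choose (2 * k + 1))) k)"

lemma coeff_tan_sq_poly: "coeff (tan_sq_poly n) k = (-1) ^ k * real (2 * n choose (2 * k + 1))"
  by (cases "k \<le> n") (auto simp: tan_sq_poly_def coeff_sum coeff_monom binomial_eq_0)

lemma degree_tan_sq_poly: "degree (tan_sq_poly n) \<le> n - 1"
  by (rule degree_le) (auto simp: coeff_tan_sq_poly binomial_eq_0)

lemma poly_tan_sq_poly_0: "poly (tan_sq_poly n) 0 = 2 * real n"
  by (simp add: poly_0_coeff_0 coeff_tan_sq_poly)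

lemma Im_Complex_one_power:
  "Im (Complex 1 t ^ (2 * n)) = t * poly (tan_sq_poly n) (t ^ 2)"
proof -
  have "Complex 1 t = \<i> * complex_of_real t + 1"
    by (simp add: complex_eq_iff)
  then have "Complex 1 t ^ (2 * n)
      = (\<Sum>i\<le>2 * n. of_nat (2 * n choose i) * (\<i> * complex_of_real t) ^ i * 1 ^ (2 * n - i))"
    by (simp only: binomial_ring)
  then have "Im (Complex 1 t ^ (2 * n)) = (\<Sum>i\<le>2 * n. real (2 * n choose i) * t ^ i * Im (\<i> ^ i))"
    by (simp add: power_mult_distrib mult_ac)
  also have "\<dots> = (\<Sum>i\<le>Suc (2 * n). real (2 * n choose i) * t ^ i * Im (\<i> ^ i))"
    by (simp add: sum.atMost_Suc binomial_eq_0)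
  also have "\<dots> = (\<Sum>k\<le>n. real (2 * n choose (2 * k + 1)) * t ^ (2 * k + 1) * (-1) ^ k)"
    by (subst sum.in_pairs_0) (simp add: power_mult)
  also have "\<dots> = t * poly (tan_sq_poly n) (t ^ 2)"
    by (simp add: tan_sq_poly_def poly_sum poly_monom sum_distrib_left power_mult mult_ac
             flip: power_mult power_add)
  finally show ?thesis .
qed

lemma poly_tan_sq_poly_eq_0:
  assumes "sin t \<noteq> 0" and "cos t \<noteq> 0" and "sin (2 * real n * t) = 0"
  shows "poly (tan_sq_poly n) (tan t ^ 2) = 0"
proof -
  have "Complex 1 (tan t) = cis t / complex_of_real (cos t)"
    using assms(2) by (simp add: complex_eq_iff tan_def)
  then have "Complex 1 (tan t) ^ (2 * n) = cis (2 * real n * t) / complex_of_real (cos t ^ (2 * n))"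
    by (simp add: power_divide DeMoivre)
  then have "tan t * poly (tan_sq_poly n) (tan t ^ 2) = 0"
    using assms(3) by (simp flip: Im_Complex_one_power add: Im_divide_of_real)
  moreover have "tan t \<noteq> 0"
    using assms(1,2) by (simp add: tan_def)
  ultimately show ?thesis
    by simp
qed

lemma tan_sq_poly_eq_prod_cot_sq:
  assumes "n \<ge> 1"
  shows "tan_sq_poly n
           = smult (2 * real n) (\<Prod>j\<in>{1..n-1}. [:1, - (cot (real j * pi / (2 * real n)) ^ 2):])"
proof -
  define \<theta> where "\<theta> j = real j * pi / (2 * real n)" for j :: nat
  have \<theta>_bounds: "0 < \<theta> j \<and> \<theta> j < pi / 2" if "j \<in> {1..n-1}" for j
    using that assms by (auto simp: \<theta>_def field_simps)
  have "strict_mono_on {1..n-1} (\<lambda>j. tan (\<theta> j) ^ 2)"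
  proof (rule strict_mono_onI)
    fix j k assume jk: "j \<in> {1..n-1}" "k \<in> {1..n-1}" "j < k"
    then have "\<theta> j < \<theta> k"
      using assms by (simp add: \<theta>_def field_simps)
    then have "tan (\<theta> j) < tan (\<theta> k)"
      using \<theta>_bounds[OF jk(1)] \<theta>_bounds[OF jk(2)] by (intro tan_monotone) auto
    moreover have "0 \<le> tan (\<theta> j)"
      using \<theta>_bounds[OF jk(1)] by (simp add: tan_gt_zero less_imp_le)
    ultimately show "tan (\<theta> j) ^ 2 < tan (\<theta> k) ^ 2"
      by (simp add: power_strict_mono)
  qed
  moreover have "tan (\<theta> j) ^ 2 \<noteq> 0" "poly (tan_sq_poly n) (tan (\<theta> j) ^ 2) = 0"
    if "j \<in> {1..n-1}" for j
  proof -
    show "tan (\<theta> j) ^ 2 \<noteq> 0"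
      using \<theta>_bounds[OF that] tan_gt_zero by force
    have "sin (\<theta> j) \<noteq> 0" "cos (\<theta> j) \<noteq> 0"
      using \<theta>_bounds[OF that] sin_gt_zero cos_gt_zero by force+
    moreover have "sin (2 * real n * \<theta> j) = 0"
      using assms by (simp add: \<theta>_def)
    ultimately show "poly (tan_sq_poly n) (tan (\<theta> j) ^ 2) = 0"
      by (rule poly_tan_sq_poly_eq_0)
  qed
  moreover have "degree (tan_sq_poly n) \<le> card {1..n-1}"
    using degree_tan_sq_poly by simp
  ultimately have "tan_sq_poly n
      = smult (poly (tan_sq_poly n) 0) (\<Prod>j\<in>{1..n-1}. [:1, - inverse (tan (\<theta> j) ^ 2):])"
    by (intro poly_eq_smult_prod_reciprocal_roots) (auto dest: strict_mono_on_imp_inj_on)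
  then show ?thesis
    by (simp add: poly_tan_sq_poly_0 \<theta>_def cot_altdef power_inverse)
qed

lemma cot_sq_power_sum_identities:
  fixes n :: nat
  assumes "n \<ge> 1"
  defines "c \<equiv> \<lambda>j. cot (real j * pi / (2 * real n)) ^ 2"
  defines "p1 \<equiv> \<Sum>j=1..n-1. c j" and "p2 \<equiv> \<Sum>j=1..n-1. c j ^ 2"
    and "p3 \<equiv> \<Sum>j=1..n-1. c j ^ 3"
  shows "2 * real n * p1 = real (2 * n choose 3)"
    and "real n * (p1 ^ 2 - p2) = real (2 * n choose 5)"
    and "real n * (p1 ^ 3 - 3 * p1 * p2 + 2 * p3) = 3 * real (2 * n choose 7)"
proof -
  let ?P = "\<Prod>j\<in>{1..n-1}. [:1, - c j:]"
  have coeff_k: "(-1) ^ k * real (2 * n choose (2 * k + 1)) = 2 * real n * coeff ?P k" for k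
    using tan_sq_poly_eq_prod_cot_sq[OF assms(1)] coeff_tan_sq_poly[of n k] by (simp add: c_def)
  have coeff1: "- real (2 * n choose 3) = 2 * real n * coeff ?P 1"
    using coeff_k[of 1] by simp
  have coeff2: "real (2 * n choose 5) = 2 * real n * coeff ?P 2"
    using coeff_k[of 2] by simp
  have coeff3: "- real (2 * n choose 7) = 2 * real n * coeff ?P 3"
    using coeff_k[of 3] by simp
  note newton = coeff_prod_linear_factors[of "{1..n-1}" c, OF finite_atLeastAtMost,
      folded p1_def p2_def p3_def]
  show "2 * real n * p1 = real (2 * n choose 3)"
    using coeff1 newton(1) by simp
  have "real n * (2 * coeff ?P 2) = real n * (p1 ^ 2 - p2)"
    by (simp only: newton(2))
  then show "real n * (p1 ^ 2 - p2) = real (2 * n choose 5)"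
    using coeff2 by linarith
  have "real n * (6 * coeff ?P 3) = real n * - (p1 ^ 3 - 3 * p1 * p2 + 2 * p3)"
    by (simp only: newton(3))
  then show "real n * (p1 ^ 3 - 3 * p1 * p2 + 2 * p3) = 3 * real (2 * n choose 7)"
    using coeff3 by linarith
qed

lemma cot_sq_power_sums:
  fixes n :: nat
  assumes "n \<ge> 1"
  defines "c \<equiv> \<lambda>j. cot (real j * pi / (2 * real n)) ^ 2"
  shows "(\<Sum>j=1..n-1. c j) = (real n - 1) * (2 * real n - 1) / 3"
    and "(\<Sum>j=1..n-1. c j ^ 2)
           = (real n - 1) * (2 * real n - 1) * (4 * real n ^ 2 + 6 * real n - 13) / 45"
    and "(\<Sum>j=1..n-1. c j ^ 3) = (real n - 1) * (2 * real n - 1)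
           * (32 * real n ^ 4 + 48 * real n ^ 3 - 112 * real n ^ 2 - 192 * real n + 251) / 945"
proof -
  define p1 p2 p3 where "p1 = (\<Sum>j=1..n-1. c j)" and "p2 = (\<Sum>j=1..n-1. c j ^ 2)"
    and "p3 = (\<Sum>j=1..n-1. c j ^ 3)"
  have identities: "2 * real n * p1 = real (2 * n choose 3)"
    "real n * (p1 ^ 2 - p2) = real (2 * n choose 5)"
    "real n * (p1 ^ 3 - 3 * p1 * p2 + 2 * p3) = 3 * real (2 * n choose 7)"
    using cot_sq_power_sum_identities[OF assms(1)] by (simp_all add: c_def p1_def p2_def p3_def)
  have n: "real n > 0"
    using assms(1) by simp
  have C3: "real (2 * n choose 3) / real n = (2 * real n - 1) * (real n - 1) * 2 / 3"
    using n by (simp add: binomial_gbinomial gbinomial_prod_rev numeral_3_eq_3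
        prod.atLeast0_lessThan_Suc field_simps)
  have C5: "real (2 * n choose 5) / real n
      = (2 * real n - 1) * (real n - 1) * (2 * real n - 3) * (real n - 2) / 15"
    using n by (simp add: binomial_gbinomial gbinomial_prod_rev eval_nat_numeral
        prod.atLeast0_lessThan_Suc field_simps)
  have C7: "real (2 * n choose 7) / real n = (2 * real n - 1) * (real n - 1)
      * (2 * real n - 3) * (real n - 2) * (2 * real n - 5) * (real n - 3) / 315"
    using n by (simp add: binomial_gbinomial gbinomial_prod_rev eval_nat_numeral
        prod.atLeast0_lessThan_Suc field_simps)
  have p1: "p1 = real (2 * n choose 3) / real n / 2"
    and p2: "p2 = p1 ^ 2 - real (2 * n choose 5) / real n"
    and p3: "p3 = (3 * (real (2 * n choose 7) / real n) - p1 ^ 3 + 3 * p1 * p2) / 2"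
    using identities n by (simp_all add: field_simps)
  show p1_closed: "p1 = (real n - 1) * (2 * real n - 1) / 3"
    unfolding p1 C3 by simp
  show p2_closed: "p2 = (real n - 1) * (2 * real n - 1) * (4 * real n ^ 2 + 6 * real n - 13) / 45"
    unfolding p2 C5 p1_closed by (simp add: field_simps power2_eq_square)
  show "p3 = (real n - 1) * (2 * real n - 1)
           * (32 * real n ^ 4 + 48 * real n ^ 3 - 112 * real n ^ 2 - 192 * real n + 251) / 945"
    unfolding p3 C7 p1_closed p2_closed by (simp add: field_simps eval_nat_numeral)
qed

lemma csc_sq_eq:
  assumes "sin x \<noteq> 0"
  shows "csc x ^ 2 = 1 + cot x ^ 2"
proof -
  have "1 + cot x ^ 2 = (sin x ^ 2 + cos x ^ 2) / sin x ^ 2"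
    using assms by (simp add: cot_def power_divide field_simps)
  then show ?thesis
    by (simp add: csc_def power_divide)
qed

theorem mainTheorem18:
  fixes n :: nat
  assumes "n \<ge> 1"
  shows "(\<Sum>j=1..n-1. csc (real j * pi / (2 * real n)) ^ 6)
         = 8 * (real n + 1) * (real n - 1) * (8 * real n ^ 4 + 29 * real n ^ 2 + 71) / 945"
proof -
  define c where "c j = cot (real j * pi / (2 * real n)) ^ 2" for j
  have "csc (real j * pi / (2 * real n)) ^ 6 = 1 + 3 * c j + 3 * c j ^ 2 + c j ^ 3"
    if "j \<in> {1..n-1}" for j
  proof -
    have "sin (real j * pi / (2 * real n)) \<noteq> 0"
      using that by (intro sin_gt_zero[THEN less_imp_neq, THEN not_sym]) (auto simp: field_simps)
    then have "csc (real j * pi / (2 * real n)) ^ 6 = (1 + c j) ^ 3"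
      unfolding c_def by (simp flip: csc_sq_eq power_mult)
    then show ?thesis
      by (simp add: power2_eq_square power3_eq_cube algebra_simps)
  qed
  then have "(\<Sum>j=1..n-1. csc (real j * pi / (2 * real n)) ^ 6)
      = (real n - 1) + 3 * (\<Sum>j=1..n-1. c j) + 3 * (\<Sum>j=1..n-1. c j ^ 2) + (\<Sum>j=1..n-1. c j ^ 3)"
    using assms by (simp add: sum.distrib sum_distrib_left of_nat_diff)
  also have "\<dots> = 8 * (real n + 1) * (real n - 1) * (8 * real n ^ 4 + 29 * real n ^ 2 + 71) / 945"
    unfolding c_def cot_sq_power_sums[OF assms] by (simp add: field_simps eval_nat_numeral)
  finally show ?thesis .
qed

end
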